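(* Let $\tau^{(k)}=\alpha\partial_t+\beta\partial_x+\sum_{i=1}^k\gamma^{(i)}\partial_{x_i}$ be a telescopic vector field (so $\beta-x_1\alpha\neq0$). Then $$\tau^{(k)}=\alpha\,D_t+(\beta-\alpha x_1)\,\mathbf{X}^{[\lambda,(k)]},$$ where $\mathbf{X}=\partial_x$, $D_t$ is truncated to $\partial_t+x_1\partial_x+\cdots+x_{k+1}\partial_{x_k}$, and $\lambda$ (a function of $(t,x,x_1,x_2)$) is $$\lambda=\frac{\gamma^{(1)}-\alpha x_2}{\beta-\alpha x_1}.$$ If $\alpha=0$, then $\lambda$ does not depend on $x_2$.
   Context: Jet coordinates $(t,x,x_1,x_2,\ldots)$, $x_i=d^ix/dt^i$; $D_t$ the total derivative. A telescopic vector field is $\tau^{(k)}=\alpha(t,x,x_1)\partial_t+\beta(t,x,x_1)\partial_x+\sum_{i=1}^k\gamma^{(i)}\partial_{x_i}$ with $\alpha,\beta,\gamma^{(1)}$ arbitrary smooth functions of $(t,x,x_1)$, $\beta-\alpha x_1\neq 0$, and for $2\le i\le k$: $\gamma^{(i)}=D_t(\gamma^{(i-1)})-D_t(\alpha)x_i+\frac{\gamma^{(1)}+x_1D_t\alpha-D_t\beta}{\beta-x_1\alpha}(\gamma^{(i-1)}-\alpha x_i)$. For a function $\lambda$ depending on finitely many jet variables and $\mathbf{X}=\rho(t,x)\partial_t+\phi^0(t,x)\partial_x$, the (generalized) $\lambda$-prolongation is $\mathbf{X}^{[\lambda,(k)]}=\rho\partial_t+\phi^0\partial_x+\sum_{i=1}^k\phi^{[\lambda,(i)]}\partial_{x_i}$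 with $\phi^{[\lambda,(0)]}=\phi^0$, $\phi^{[\lambda,(i)]}=D_t(\phi^{[\lambda,(i-1)]})-D_t(\rho)x_i+\lambda(\phi^{[\lambda,(i-1)]}-\rho x_i)$. *)

theory Defs
  imports "HOL-Analysis.Analysis"
begin

text \<open>Jet coordinates: a point of the jet space is a pair (t, u) where
  u :: nat \<Rightarrow> real, with u 0 = x and u i = x_i.\<close>

type_synonym jetfun = "real \<Rightarrow> (nat \<Rightarrow> real) \<Rightarrow> real"

coinductive smooth3 :: "(real \<Rightarrow> real \<Rightarrow> real \<Rightarrow> real) \<Rightarrow> bool" where
  "(\<forall>t x y. (\<lambda>(a, b, c). f a b c) differentiable (at (t, x, y))) \<Longrightarrow>
   smooth3 (\<lambda>t x y. deriv (\<lambda>s. f s x y) t) \<Longrightarrow>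
   smooth3 (\<lambda>t x y. deriv (\<lambda>s. f t s y) x) \<Longrightarrow>
   smooth3 (\<lambda>t x y. deriv (\<lambda>s. f t x s) y) \<Longrightarrow>
   smooth3 f"

definition lift3 :: "(real \<Rightarrow> real \<Rightarrow> real \<Rightarrow> real) \<Rightarrow> jetfun" where
  "lift3 f = (\<lambda>t u. f t (u 0) (u 1))"

definition lift2 :: "(real \<Rightarrow> real \<Rightarrow> real) \<Rightarrow> jetfun" where
  "lift2 f = (\<lambda>t u. f t (u 0))"

definition Dt :: "nat \<Rightarrow> jetfun \<Rightarrow> jetfun" where
  "Dt n F = (\<lambda>t u. deriv (\<lambda>s. F s u) t +
      (\<Sum>i\<le>n. u (Suc i) * deriv (\<lambda>y. F t (u(i := y))) (u i)))"

fun tel_gamma :: "nat \<Rightarrow> (real \<Rightarrow> real \<Rightarrow> real \<Rightarrow> real) \<Rightarrow> (real \<Rightarrow> real \<Rightarrow> real \<Rightarrow> real)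
    \<Rightarrow> (real \<Rightarrow> real \<Rightarrow> real \<Rightarrow> real) \<Rightarrow> nat \<Rightarrow> jetfun" where
  "tel_gamma k \<alpha> \<beta> \<gamma>1 0 = (\<lambda>t u. 0)"
| "tel_gamma k \<alpha> \<beta> \<gamma>1 (Suc 0) = lift3 \<gamma>1"
| "tel_gamma k \<alpha> \<beta> \<gamma>1 (Suc (Suc i)) =
     (\<lambda>t u. Dt k (tel_gamma k \<alpha> \<beta> \<gamma>1 (Suc i)) t u - Dt k (lift3 \<alpha>) t u * u (Suc (Suc i))
       + (lift3 \<gamma>1 t u + u 1 * Dt k (lift3 \<alpha>) t u - Dt k (lift3 \<beta>) t u)
           / (lift3 \<beta> t u - u 1 * lift3 \<alpha> t u)
         * (tel_gamma k \<alpha> \<beta> \<gamma>1 (Suc i) t u - lift3 \<alpha> t u * u (Suc (Suc i))))"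

text \<open>Vector fields on J^k are given by their coefficient functions:
  component 0 is the coefficient of \<partial>_t, component (Suc j) that of \<partial>_(x_j)
  (with x_0 = x), for j \<le> k.\<close>

definition telescopic_field :: "nat \<Rightarrow> (real \<Rightarrow> real \<Rightarrow> real \<Rightarrow> real) \<Rightarrow> (real \<Rightarrow> real \<Rightarrow> real \<Rightarrow> real)
    \<Rightarrow> (real \<Rightarrow> real \<Rightarrow> real \<Rightarrow> real) \<Rightarrow> nat \<Rightarrow> jetfun" where
  "telescopic_field k \<alpha> \<beta> \<gamma>1 j =
     (if j = 0 then lift3 \<alpha> else if j = 1 then lift3 \<beta> else tel_gamma k \<alpha> \<beta> \<gamma>1 (j - 1))"

definition Dt_field :: "nat \<Rightarrow> jetfun" where
  "Dt_field j = (if j = 0 then (\<lambda>t u. 1) else (\<lambda>t u. u j))"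

text \<open>The coefficients phi^[lambda,(i)] of the lambda-prolongation of
  X = rho \<partial>_t + phi0 \<partial>_x (total derivative truncated at order n).\<close>

fun prol_phi :: "nat \<Rightarrow> (real \<Rightarrow> real \<Rightarrow> real) \<Rightarrow> (real \<Rightarrow> real \<Rightarrow> real) \<Rightarrow> jetfun \<Rightarrow> nat \<Rightarrow> jetfun" where
  "prol_phi n \<rho> \<phi>0 lam 0 = lift2 \<phi>0"
| "prol_phi n \<rho> \<phi>0 lam (Suc i) =
     (\<lambda>t u. Dt n (prol_phi n \<rho> \<phi>0 lam i) t u - Dt n (lift2 \<rho>) t u * u (Suc i)
        + lam t u * (prol_phi n \<rho> \<phi>0 lam i t u - lift2 \<rho> t u * u (Suc i)))"

definition lambda_prolongation :: "nat \<Rightarrow> (real \<Rightarrow> real \<Rightarrow> real) \<Rightarrow> (real \<Rightarrow> real \<Rightarrow> real)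
    \<Rightarrow> jetfun \<Rightarrow> nat \<Rightarrow> jetfun" where
  "lambda_prolongation n \<rho> \<phi>0 lam j =
     (if j = 0 then lift2 \<rho> else prol_phi n \<rho> \<phi>0 lam (j - 1))"

end

theory Submission
  imports Defs
begin

text \<open>Write \<open>A = \<alpha>\<close>, \<open>B = \<beta> - x\<^sub>1 \<alpha>\<close> and \<open>\<phi>\<^sub>i\<close> for the coefficients of the
  \<open>\<lambda>\<close>-prolongation of \<open>\<partial>\<^sub>x\<close>, so \<open>\<phi>\<^sub>0 = 1\<close> and \<open>\<phi>\<^sub>i\<^sub>+\<^sub>1 = D\<^sub>t \<phi>\<^sub>i + \<lambda> \<phi>\<^sub>i\<close>. One shows
  \<open>\<gamma>\<^sup>(\<^sup>i\<^sup>) = A x\<^sub>i\<^sub>+\<^sub>1 + B \<phi>\<^sub>i\<close> by induction on \<open>i\<close>. Since \<open>D\<^sub>t\<close> obeys the Leibniz rule,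
  \<open>D\<^sub>t B = D\<^sub>t \<beta> - x\<^sub>2 A - x\<^sub>1 D\<^sub>t A\<close>, so the coefficient \<open>(\<gamma>\<^sup>(\<^sup>1\<^sup>) + x\<^sub>1 D\<^sub>t \<alpha> - D\<^sub>t \<beta>) / B\<close> of the
  telescopic recursion equals \<open>\<lambda> - D\<^sub>t B / B\<close>; the \<open>D\<^sub>t B\<close> terms then cancel and what remains
  is exactly the prolongation recursion. The analytic input is only the Leibniz rule, valid on
  the class of jet functions built from coordinates and smooth functions of \<open>(t, x, x\<^sub>1)\<close>
  by field operations, which is closed under partial derivatives.\<close>

lemma smooth3_partial_smooth:
  assumes "smooth3 f"
  shows "smooth3 (\<lambda>t x y. deriv (\<lambda>s. f s x y) t)"
    and "smooth3 (\<lambda>t x y. deriv (\<lambda>s. f t s y) x)"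
    and "smooth3 (\<lambda>t x y. deriv (\<lambda>s. f t x s) y)"
  using assms by (auto elim: smooth3.cases)

lemma smooth3_real_differentiable:
  assumes "smooth3 f"
  shows "(\<lambda>s. f s x y) differentiable (at t)"
    and "(\<lambda>s. f t s y) differentiable (at x)"
    and "(\<lambda>s. f t x s) differentiable (at y)"
proof -
  have f: "(\<lambda>(a, b, c). f a b c) differentiable (at (t, x, y))"
    using assms by (auto elim: smooth3.cases)
  have "(\<lambda>s. (s, x, y)) differentiable (at t)" "(\<lambda>s. (t, s, y)) differentiable (at x)"
    "(\<lambda>s. (t, x, s)) differentiable (at y)"
    by (intro derivative_intros)+
  then show "(\<lambda>s. f s x y) differentiable (at t)" "(\<lambda>s. f t s y) differentiable (at x)"
    "(\<lambda>s. f t x s) differentiable (at y)"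
    using differentiable_chain_at[where g = "\<lambda>(a, b, c). f a b c"] f by (fastforce simp: o_def)+
qed

text \<open>Direction \<open>None\<close> varies \<open>t\<close>, direction \<open>Some j\<close> varies \<open>x\<^sub>j\<close>.\<close>

definition jet_slice :: "nat option \<Rightarrow> jetfun \<Rightarrow> real \<Rightarrow> (nat \<Rightarrow> real) \<Rightarrow> real \<Rightarrow> real" where
  "jet_slice d F t u = (case d of None \<Rightarrow> (\<lambda>s. F s u) | Some j \<Rightarrow> (\<lambda>s. F t (u(j := s))))"

definition jet_coord :: "nat option \<Rightarrow> real \<Rightarrow> (nat \<Rightarrow> real) \<Rightarrow> real" where
  "jet_coord d t u = (case d of None \<Rightarrow> t | Some j \<Rightarrow> u j)"

definition jet_partial :: "nat option \<Rightarrow> jetfun \<Rightarrow> jetfun" where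
  "jet_partial d F = (\<lambda>t u. deriv (jet_slice d F t u) (jet_coord d t u))"

lemma jet_slice_at_coord [simp]: "jet_slice d F t u (jet_coord d t u) = F t u"
  by (cases d) (simp_all add: jet_slice_def jet_coord_def)

lemma jet_slice_unop: "jet_slice d (\<lambda>t u. f (F t u)) t u = (\<lambda>s. f (jet_slice d F t u s))"
  by (cases d) (simp_all add: jet_slice_def)

lemma jet_slice_binop:
  "jet_slice d (\<lambda>t u. f (F t u) (G t u)) t u = (\<lambda>s. f (jet_slice d F t u s) (jet_slice d G t u s))"
  by (cases d) (simp_all add: jet_slice_def)

lemma Dt_eq_jet_partial:
  "Dt n F = (\<lambda>t u. jet_partial None F t u + (\<Sum>i\<le>n. u (Suc i) * jet_partial (Some i) F t u))"
  by (simp add: Dt_def jet_partial_def jet_slice_def jet_coord_def)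

inductive smooth_jet :: "jetfun \<Rightarrow> bool" where
  const: "smooth_jet (\<lambda>t u. c)"
| coord: "smooth_jet (\<lambda>t u. u j)"
| lift3: "smooth3 f \<Longrightarrow> smooth_jet (lift3 f)"
| add: "smooth_jet F \<Longrightarrow> smooth_jet G \<Longrightarrow> smooth_jet (\<lambda>t u. F t u + G t u)"
| diff: "smooth_jet F \<Longrightarrow> smooth_jet G \<Longrightarrow> smooth_jet (\<lambda>t u. F t u - G t u)"
| mult: "smooth_jet F \<Longrightarrow> smooth_jet G \<Longrightarrow> smooth_jet (\<lambda>t u. F t u * G t u)"
| inverse: "smooth_jet F \<Longrightarrow> (\<And>t u. F t u \<noteq> 0) \<Longrightarrow> smooth_jet (\<lambda>t u. inverse (F t u))"

lemma smooth_jet_sum: "(\<And>i. smooth_jet (G i)) \<Longrightarrow> smooth_jet (\<lambda>t u. \<Sum>i\<le>(n::nat). G i t u)"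
  by (induction n) (simp_all add: smooth_jet.add)

lemma smooth_jet_lift3_has_partial:
  assumes "smooth3 f"
  shows "\<exists>F'. smooth_jet F' \<and>
    (\<forall>t u. (jet_slice d (lift3 f) t u has_real_derivative F' t u) (at (jet_coord d t u)))"
proof -
  note diffs = smooth3_real_differentiable[OF assms, unfolded DERIV_deriv_iff_real_differentiable[symmetric]]
  note lifts = smooth3_partial_smooth[OF assms, THEN smooth_jet.lift3]
  consider "d = None" | "d = Some 0" | "d = Some 1" | j where "d = Some (Suc (Suc j))"
    by (metis One_nat_def not_None_eq not0_implies_Suc)
  then show ?thesis
  proof cases
    case 1
    then show ?thesis using diffs(1) lifts(1)
      by (fastforce simp: jet_slice_def jet_coord_def lift3_def)
  next
    case 2
    then show ?thesis using diffs(2) lifts(2)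
      by (fastforce simp: jet_slice_def jet_coord_def lift3_def)
  next
    case 3
    then show ?thesis using diffs(3) lifts(3)
      by (fastforce simp: jet_slice_def jet_coord_def lift3_def)
  next
    case 4
    then show ?thesis
      by (auto simp: jet_slice_def jet_coord_def lift3_def intro!: exI[of _ "\<lambda>t u. 0"] smooth_jet.const)
  qed
qed

lemma smooth_jet_has_partial:
  assumes "smooth_jet F"
  shows "\<exists>F'. smooth_jet F' \<and>
    (\<forall>t u. (jet_slice d F t u has_real_derivative F' t u) (at (jet_coord d t u)))"
  using assms
proof (induction rule: smooth_jet.induct)
  case (const c)
  show ?case by (auto simp: jet_slice_def intro!: exI[of _ "\<lambda>t u. 0"] smooth_jet.const split: option.split)
next
  case (coord j)
  show ?case
  proof (cases "d = Some j")
    case True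
    then show ?thesis
      by (auto simp: jet_slice_def jet_coord_def intro!: exI[of _ "\<lambda>t u. 1"] smooth_jet.const)
  next
    case False
    then have "jet_slice d (\<lambda>t u. u j) t u = (\<lambda>s. u j)" for t u
      by (auto simp: jet_slice_def split: option.split)
    then show ?thesis by (auto intro!: exI[of _ "\<lambda>t u. 0"] smooth_jet.const)
  qed
next
  case (lift3 f)
  then show ?case by (rule smooth_jet_lift3_has_partial)
next
  case (add F G)
  then obtain F' G' where "smooth_jet F'" "smooth_jet G'"
    "\<And>t u. (jet_slice d F t u has_real_derivative F' t u) (at (jet_coord d t u))"
    "\<And>t u. (jet_slice d G t u has_real_derivative G' t u) (at (jet_coord d t u))" by blast
  then show ?case
    by (intro exI[of _ "\<lambda>t u. F' t u + G' t u"])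
      (auto simp: jet_slice_binop[of _ "(+)"] intro!: smooth_jet.add DERIV_add)
next
  case (diff F G)
  then obtain F' G' where "smooth_jet F'" "smooth_jet G'"
    "\<And>t u. (jet_slice d F t u has_real_derivative F' t u) (at (jet_coord d t u))"
    "\<And>t u. (jet_slice d G t u has_real_derivative G' t u) (at (jet_coord d t u))" by blast
  then show ?case
    by (intro exI[of _ "\<lambda>t u. F' t u - G' t u"])
      (auto simp: jet_slice_binop[of _ "(-)"] intro!: smooth_jet.diff DERIV_diff)
next
  case (mult F G)
  then obtain F' G' where "smooth_jet F'" "smooth_jet G'"
    "\<And>t u. (jet_slice d F t u has_real_derivative F' t u) (at (jet_coord d t u))"
    "\<And>t u. (jet_slice d G t u has_real_derivative G' t u) (at (jet_coord d t u))" by blast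
  with mult.hyps show ?case
    by (intro exI[of _ "\<lambda>t u. F' t u * G t u + G' t u * F t u"])
      (auto simp: jet_slice_binop[of _ "(*)"] intro!: smooth_jet.add smooth_jet.mult
        DERIV_mult[THEN DERIV_cong])
next
  case (inverse F)
  then obtain F' where F': "smooth_jet F'"
    "\<And>t u. (jet_slice d F t u has_real_derivative F' t u) (at (jet_coord d t u))" by blast
  let ?F'' = "\<lambda>t u. - 1 * (F' t u * (inverse (F t u) * inverse (F t u)))"
  have "smooth_jet ?F''"
    using inverse.hyps F'(1) by (intro smooth_jet.mult smooth_jet.const smooth_jet.inverse)
  moreover have "(jet_slice d (\<lambda>t u. inverse (F t u)) t u has_real_derivative ?F'' t u)
      (at (jet_coord d t u))" for t u
    unfolding jet_slice_unop[of _ inverse]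
    using DERIV_inverse_fun[OF F'(2), of t u] inverse.hyps(2) by (simp add: power2_eq_square)
  ultimately show ?case by blast
qed

lemma smooth_jet_DERIV:
  assumes "smooth_jet F"
  shows "(jet_slice d F t u has_real_derivative jet_partial d F t u) (at (jet_coord d t u))"
  using smooth_jet_has_partial[OF assms, of d] by (metis DERIV_imp_deriv jet_partial_def)

lemma smooth_jet_jet_partial:
  assumes "smooth_jet F"
  shows "smooth_jet (jet_partial d F)"
proof -
  obtain F' where "smooth_jet F'"
    and F': "\<And>t u. (jet_slice d F t u has_real_derivative F' t u) (at (jet_coord d t u))"
    using smooth_jet_has_partial[OF assms, of d] by blast
  moreover have "jet_partial d F = F'"
    unfolding jet_partial_def using F' by (auto intro!: ext DERIV_imp_deriv)
  ultimately show ?thesis by simp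
qed

lemma smooth_jet_Dt: "smooth_jet F \<Longrightarrow> smooth_jet (Dt n F)"
  unfolding Dt_eq_jet_partial
  by (intro smooth_jet.add smooth_jet_sum smooth_jet.mult smooth_jet.coord smooth_jet_jet_partial)

lemma jet_partial_const: "jet_partial d (\<lambda>t u. c) = (\<lambda>t u. 0)"
  by (cases d) (simp_all add: jet_partial_def jet_slice_def)

lemma jet_partial_coord:
  "jet_partial d (\<lambda>t u. u j) t u = (if d = Some j then 1 else 0)"
  by (cases d) (auto simp: jet_partial_def jet_slice_def jet_coord_def)

lemma jet_partial_add:
  "smooth_jet F \<Longrightarrow> smooth_jet G \<Longrightarrow>
    jet_partial d (\<lambda>t u. F t u + G t u) t u = jet_partial d F t u + jet_partial d G t u"
  unfolding jet_partial_def[of d "\<lambda>t u. F t u + G t u"] jet_slice_binop[of _ "(+)"]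
  by (intro DERIV_imp_deriv DERIV_add smooth_jet_DERIV)

lemma jet_partial_diff:
  "smooth_jet F \<Longrightarrow> smooth_jet G \<Longrightarrow>
    jet_partial d (\<lambda>t u. F t u - G t u) t u = jet_partial d F t u - jet_partial d G t u"
  unfolding jet_partial_def[of d "\<lambda>t u. F t u - G t u"] jet_slice_binop[of _ "(-)"]
  by (intro DERIV_imp_deriv DERIV_diff smooth_jet_DERIV)

lemma jet_partial_mult:
  assumes "smooth_jet F" "smooth_jet G"
  shows "jet_partial d (\<lambda>t u. F t u * G t u) t u
    = jet_partial d F t u * G t u + F t u * jet_partial d G t u"
proof -
  have "((\<lambda>s. jet_slice d F t u s * jet_slice d G t u s) has_real_derivative
      jet_partial d F t u * G t u + jet_partial d G t u * F t u) (at (jet_coord d t u))"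
    using DERIV_mult[OF smooth_jet_DERIV[OF assms(1)] smooth_jet_DERIV[OF assms(2)]] by simp
  then show ?thesis
    unfolding jet_partial_def[of d "\<lambda>t u. F t u * G t u"] jet_slice_binop[of _ "(*)"]
    by (simp add: DERIV_imp_deriv mult.commute)
qed

lemma Dt_const: "Dt n (\<lambda>t u. c) = (\<lambda>t u. 0)"
  by (simp add: Dt_eq_jet_partial jet_partial_const)

lemma Dt_coord: "j \<le> n \<Longrightarrow> Dt n (\<lambda>t u. u j) t u = u (Suc j)"
  by (simp add: Dt_eq_jet_partial jet_partial_coord if_distrib sum.delta cong: if_cong)

lemma Dt_add:
  "smooth_jet F \<Longrightarrow> smooth_jet G \<Longrightarrow> Dt n (\<lambda>t u. F t u + G t u) t u = Dt n F t u + Dt n G t u"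
  by (simp add: Dt_eq_jet_partial jet_partial_add distrib_left sum.distrib)

lemma Dt_diff:
  "smooth_jet F \<Longrightarrow> smooth_jet G \<Longrightarrow> Dt n (\<lambda>t u. F t u - G t u) t u = Dt n F t u - Dt n G t u"
  by (simp add: Dt_eq_jet_partial jet_partial_diff right_diff_distrib sum_subtractf)

lemma Dt_mult:
  "smooth_jet F \<Longrightarrow> smooth_jet G \<Longrightarrow>
    Dt n (\<lambda>t u. F t u * G t u) t u = Dt n F t u * G t u + F t u * Dt n G t u"
  by (simp add: Dt_eq_jet_partial jet_partial_mult algebra_simps sum.distrib
      sum_distrib_left sum_distrib_right)

lemma prol_phi_dx_0: "prol_phi n (\<lambda>t x. 0) (\<lambda>t x. 1) lam 0 = (\<lambda>t u. 1)"
  by (simp add: lift2_def)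

lemma prol_phi_dx_Suc:
  "prol_phi n (\<lambda>t x. 0) (\<lambda>t x. 1) lam (Suc i)
    = (\<lambda>t u. Dt n (prol_phi n (\<lambda>t x. 0) (\<lambda>t x. 1) lam i) t u
              + lam t u * prol_phi n (\<lambda>t x. 0) (\<lambda>t x. 1) lam i t u)"
  by (simp add: lift2_def Dt_const)

lemma smooth_jet_prol_phi_dx:
  "smooth_jet lam \<Longrightarrow> smooth_jet (prol_phi n (\<lambda>t x. 0) (\<lambda>t x. 1) lam i)"
  by (induction i)
    (simp_all only: prol_phi_dx_0 prol_phi_dx_Suc smooth_jet.const smooth_jet.add smooth_jet.mult
      smooth_jet_Dt)

lemma tel_gamma_eq_prol_phi_dx:
  fixes \<alpha> \<beta> \<gamma>1 :: "real \<Rightarrow> real \<Rightarrow> real \<Rightarrow> real"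
  assumes "smooth3 \<alpha>" "smooth3 \<beta>" "smooth3 \<gamma>1"
    and B_nonzero: "\<And>t u. lift3 \<beta> t u - u 1 * lift3 \<alpha> t u \<noteq> 0"
    and lam_def: "lam = (\<lambda>t u. (lift3 \<gamma>1 t u - lift3 \<alpha> t u * u 2) / (lift3 \<beta> t u - u 1 * lift3 \<alpha> t u))"
    and "1 \<le> m" "m \<le> k"
  shows "tel_gamma k \<alpha> \<beta> \<gamma>1 m = (\<lambda>t u. lift3 \<alpha> t u * u (Suc m)
           + (lift3 \<beta> t u - u 1 * lift3 \<alpha> t u) * prol_phi k (\<lambda>t x. 0) (\<lambda>t x. 1) lam m t u)"
  using \<open>1 \<le> m\<close> \<open>m \<le> k\<close>
proof (induction m rule: nat_induct_at_least)
  define A B \<phi> where "A = lift3 \<alpha>" and "B = (\<lambda>t u. lift3 \<beta> t u - u 1 * lift3 \<alpha> t u)"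
    and "\<phi> = prol_phi k (\<lambda>t x. 0) (\<lambda>t x. 1) lam"
  have sA: "smooth_jet A"
    unfolding A_def using assms(1) by (rule smooth_jet.lift3)
  have sB: "smooth_jet B"
    unfolding B_def using assms(1,2) by (intro smooth_jet.diff smooth_jet.mult smooth_jet.coord smooth_jet.lift3)
  have B_neq_0: "B t u \<noteq> 0" for t u
    using B_nonzero by (simp add: B_def)
  have lam_B: "lam t u = (lift3 \<gamma>1 t u - A t u * u 2) / B t u" for t u
    by (simp add: lam_def A_def B_def)
  have "smooth_jet lam"
    unfolding lam_B[abs_def] divide_inverse using assms(3) B_nonzero sA sB
    by (intro smooth_jet.mult smooth_jet.diff smooth_jet.lift3 smooth_jet.coord smooth_jet.inverse)
      (auto simp: B_def)
  then have s\<phi>: "smooth_jet (\<phi> i)" for i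
    unfolding \<phi>_def by (rule smooth_jet_prol_phi_dx)
  {
    case base
    show ?case
      unfolding One_nat_def prol_phi_dx_Suc prol_phi_dx_0 Dt_const
      using B_nonzero by (auto simp: lam_def numeral_2_eq_2)
  next
    case (Suc m)
    then have IH: "tel_gamma k \<alpha> \<beta> \<gamma>1 m = (\<lambda>t u. A t u * u (Suc m) + B t u * \<phi> m t u)"
      by (simp add: A_def B_def \<phi>_def)
    obtain i where m: "m = Suc i" using \<open>1 \<le> m\<close> by (cases m) auto
    show ?case
    proof (rule ext, rule ext)
      fix t u
      have recursion: "tel_gamma k \<alpha> \<beta> \<gamma>1 (Suc m) t u = Dt k (tel_gamma k \<alpha> \<beta> \<gamma>1 m) t u
          - Dt k A t u * u (Suc m) + (lift3 \<gamma>1 t u + u 1 * Dt k A t u - Dt k (lift3 \<beta>) t u) / B t u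
            * (tel_gamma k \<alpha> \<beta> \<gamma>1 m t u - A t u * u (Suc m))"
        by (simp add: m A_def B_def)
      have Dt_B: "Dt k B t u = Dt k (lift3 \<beta>) t u - (u 2 * A t u + u 1 * Dt k A t u)"
        using \<open>Suc m \<le> k\<close> assms(2) sA unfolding B_def A_def
        by (simp add: Dt_diff Dt_mult Dt_coord smooth_jet.intros numeral_2_eq_2)
      have Dt_gamma: "Dt k (tel_gamma k \<alpha> \<beta> \<gamma>1 m) t u
          = Dt k A t u * u (Suc m) + A t u * u (Suc (Suc m)) + Dt k B t u * \<phi> m t u + B t u * Dt k (\<phi> m) t u"
        using \<open>Suc m \<le> k\<close> sA sB s\<phi> unfolding IH
        by (simp add: Dt_add Dt_mult Dt_coord smooth_jet.intros)
      have coefficient: "lift3 \<gamma>1 t u + u 1 * Dt k A t u - Dt k (lift3 \<beta>) t u = lam t u * B t u - Dt k B t u"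
        using B_neq_0[of t u] by (simp add: Dt_B lam_B field_simps)
      have \<phi>_Suc: "\<phi> (Suc m) t u = Dt k (\<phi> m) t u + lam t u * \<phi> m t u"
        unfolding \<phi>_def prol_phi_dx_Suc ..
      have "tel_gamma k \<alpha> \<beta> \<gamma>1 (Suc m) t u = A t u * u (Suc (Suc m)) + B t u * \<phi> (Suc m) t u"
        unfolding recursion Dt_gamma coefficient \<phi>_Suc
        using B_neq_0[of t u] by (simp add: IH field_simps)
      then show "tel_gamma k \<alpha> \<beta> \<gamma>1 (Suc m) t u = lift3 \<alpha> t u * u (Suc (Suc m))
          + (lift3 \<beta> t u - u 1 * lift3 \<alpha> t u) * prol_phi k (\<lambda>t x. 0) (\<lambda>t x. 1) lam (Suc m) t u"
        by (simp only: A_def B_def \<phi>_def)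
    qed
  }
qed

theorem theorem2p4:
  fixes \<alpha> \<beta> \<gamma>1 :: "real \<Rightarrow> real \<Rightarrow> real \<Rightarrow> real" and k :: nat
  assumes "smooth3 \<alpha>" and "smooth3 \<beta>" and "smooth3 \<gamma>1"
    and "\<forall>t x x1. \<beta> t x x1 - \<alpha> t x x1 * x1 \<noteq> 0"
  defines "lam \<equiv> (\<lambda>t u. (\<gamma>1 t (u 0) (u 1) - \<alpha> t (u 0) (u 1) * u 2)
                          / (\<beta> t (u 0) (u 1) - \<alpha> t (u 0) (u 1) * u 1))"
  shows "(\<forall>j \<le> Suc k. \<forall>t u.
            telescopic_field k \<alpha> \<beta> \<gamma>1 j t u
              = \<alpha> t (u 0) (u 1) * Dt_field j t u
                + (\<beta> t (u 0) (u 1) - \<alpha> t (u 0) (u 1) * u 1)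
                  * lambda_prolongation k (\<lambda>t x. 0) (\<lambda>t x. 1) lam j t u)
       \<and> ((\<forall>t x x1. \<alpha> t x x1 = 0) \<longrightarrow> (\<forall>t u y. lam t (u(2 := y)) = lam t u))"
proof (intro conjI allI impI)
  fix j t u
  assume "j \<le> Suc k"
  have B_nonzero: "\<And>t u. lift3 \<beta> t u - u 1 * lift3 \<alpha> t u \<noteq> 0"
    using assms(4) by (simp add: lift3_def mult.commute)
  have "lam = (\<lambda>t u. (lift3 \<gamma>1 t u - lift3 \<alpha> t u * u 2) / (lift3 \<beta> t u - u 1 * lift3 \<alpha> t u))"
    by (simp add: lam_def lift3_def mult.commute)
  note gamma = tel_gamma_eq_prol_phi_dx[OF assms(1-3) B_nonzero this]
  consider "j = 0" | "j = 1" | "2 \<le> j" "j - 1 \<le> k"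
    using \<open>j \<le> Suc k\<close> by linarith
  then show "telescopic_field k \<alpha> \<beta> \<gamma>1 j t u
      = \<alpha> t (u 0) (u 1) * Dt_field j t u
        + (\<beta> t (u 0) (u 1) - \<alpha> t (u 0) (u 1) * u 1) * lambda_prolongation k (\<lambda>t x. 0) (\<lambda>t x. 1) lam j t u"
  proof cases
    case 3
    then show ?thesis
      using gamma[of "j - 1"]
      by (simp add: telescopic_field_def Dt_field_def lambda_prolongation_def lift3_def mult.commute)
  qed (simp_all add: telescopic_field_def Dt_field_def lambda_prolongation_def lift3_def lift2_def)
next
  fix t u y
  assume "\<forall>t x x1. \<alpha> t x x1 = 0"
  then show "lam t (u(2 := y)) = lam t u"
    by (simp add: lam_def)
qed

end
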